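(* Let $m,n\ge 0$ with $m+n\ge 3$. Then the surjective homomorphism of Leibniz superalgebras $\psi:\mathfrak{stl}(m,n,\mathcal A)\to\mathfrak{sl}(m,n,\mathcal A)$, $\psi(v_{ij}(a))=E_{ij}(a)$, is a central extension; that is, $[t,x]=[x,t]=0$ for all $t\in\operatorname{Ker}\psi$ and all $x\in\mathfrak{stl}(m,n,\mathcal A)$.
   Context: Standing assumptions: $K$ is a field with $\operatorname{char}K\ne 2,3$, and $\mathcal A$ is an associative unital $K$-algebra. A Leibniz superalgebra is a $\mathbb Z_2$-graded $K$-vector space $L=L_0\oplus L_1$ with a bilinear bracket satisfying $[L_\sigma,L_{\sigma'}]\subseteq L_{\sigma+\sigma'}$ and $[[a,b],c]=[a,[b,c]]-(-1)^{|a||b|}[b,[a,c]]$ for homogeneous $a,b,c$. Every Lie superalgebra is a Leibniz superalgebra. For $1\le i,j\le m+n$ put $\tau_{ij}=0$ if $i,j\le m$ or $i,j\ge m+1$, and $\tau_{ij}=1$ otherwise. $\mathfrak{gl}(m,n,\mathcal A)$ is the Lie superalgebra of $(m+n)\times(m+n)$ matrices over $\mathcal A$, where the matrix unit $E_{ij}(a)$ (entry $a$ in position $(i,j)$, zeros elsewhere) has degree $\tau_{ij}$, with bracket $[X,Y]=XY-(-1)^{\alpha\beta}YX$ for $X$ of degree $\alpha$, $Y$ of degree $\beta$. $\mathfrak{sl}(m,n,\mathcal A)$ is the subsuperalgebra generated by all $E_{ij}(a)$ with $i\ne j$, $a\in\mathcal A$ (the derived algebra of $\mathfrak{gl}(m,n,\mathcal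 A)$). The Steinberg Leibniz superalgebra $\mathfrak{stl}(m,n,\mathcal A)$ is the Leibniz superalgebra generated by symbols $v_{ij}(a)$, $1\le i\ne j\le m+n$, $a\in\mathcal A$, with $v_{ij}(a)$ of degree $\tau_{ij}$, subject to: (1) $v_{ij}$ is $K$-linear in $a$; (2) $[v_{ij}(a),v_{kl}(b)]=0$ if $i\ne l$ and $j\ne k$; (3) $[v_{ij}(a),v_{kl}(b)]=v_{il}(ab)$ if $i\ne l$, $j=k$; (4) $[v_{ij}(a),v_{kl}(b)]=-(-1)^{\tau_{ij}\tau_{kl}}v_{kj}(ba)$ if $i=l$, $j\ne k$. *)

theory Defs
  imports Main
begin

text \<open>Indices are 0-based: 0 .. m+n-1; index i is "even" iff i < m.
  Degrees in Z_2 are represented by bool (True = odd).\<close>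

definition tau :: "nat \<Rightarrow> nat \<Rightarrow> nat \<Rightarrow> bool" where
  "tau m i j = ((i < m) \<noteq> (j < m))"

definition kalg :: "('k::field \<Rightarrow> 'a::ring_1 \<Rightarrow> 'a) \<Rightarrow> bool" where
  "kalg smul \<longleftrightarrow>
     (\<forall>k a b. smul k (a + b) = smul k a + smul k b) \<and>
     (\<forall>k l a. smul (k + l) a = smul k a + smul l a) \<and>
     (\<forall>k l a. smul (k * l) a = smul k (smul l a)) \<and>
     (\<forall>a. smul 1 a = a) \<and>
     (\<forall>k a b. smul k (a * b) = smul k a * b) \<and>
     (\<forall>k a b. smul k (a * b) = a * smul k b)"

text \<open>Formal expressions in the generators v_ij(a): elements of the free
  K-vector space with a free bilinear bracket.\<close>

datatype ('k, 'a) tm =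
    Gen nat nat 'a
  | Zr
  | Ad "('k, 'a) tm" "('k, 'a) tm"
  | Sm 'k "('k, 'a) tm"
  | Br "('k, 'a) tm" "('k, 'a) tm"

fun wf_tm :: "nat \<Rightarrow> nat \<Rightarrow> ('k, 'a) tm \<Rightarrow> bool" where
  "wf_tm m n (Gen i j a) = (i < m + n \<and> j < m + n \<and> i \<noteq> j)"
| "wf_tm m n Zr = True"
| "wf_tm m n (Ad s t) = (wf_tm m n s \<and> wf_tm m n t)"
| "wf_tm m n (Sm k t) = wf_tm m n t"
| "wf_tm m n (Br s t) = (wf_tm m n s \<and> wf_tm m n t)"

inductive hdeg :: "nat \<Rightarrow> ('k, 'a) tm \<Rightarrow> bool \<Rightarrow> bool" for m where
  "hdeg m (Gen i j a) (tau m i j)"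
| "hdeg m Zr d"
| "hdeg m s d \<Longrightarrow> hdeg m t d \<Longrightarrow> hdeg m (Ad s t) d"
| "hdeg m t d \<Longrightarrow> hdeg m (Sm k t) d"
| "hdeg m s d1 \<Longrightarrow> hdeg m t d2 \<Longrightarrow> hdeg m (Br s t) (d1 \<noteq> d2)"

definition sgn :: "bool \<Rightarrow> 'k::field" where
  "sgn b = (if b then -1 else 1)"

text \<open>The congruence defining the Steinberg Leibniz superalgebra stl(m,n,A):
  stl(m,n,A) is the set of well-formed expressions modulo stl_eq.\<close>

inductive stl_eq :: "nat \<Rightarrow> nat \<Rightarrow> ('k::field \<Rightarrow> 'a::ring_1 \<Rightarrow> 'a)
    \<Rightarrow> ('k, 'a) tm \<Rightarrow> ('k, 'a) tm \<Rightarrow> bool" for m n smul where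
  refl: "stl_eq m n smul x x"
| sym: "stl_eq m n smul x y \<Longrightarrow> stl_eq m n smul y x"
| trans: "stl_eq m n smul x y \<Longrightarrow> stl_eq m n smul y z \<Longrightarrow> stl_eq m n smul x z"
| cong_Ad: "stl_eq m n smul x x' \<Longrightarrow> stl_eq m n smul y y' \<Longrightarrow> stl_eq m n smul (Ad x y) (Ad x' y')"
| cong_Sm: "stl_eq m n smul x x' \<Longrightarrow> stl_eq m n smul (Sm k x) (Sm k x')"
| cong_Br: "stl_eq m n smul x x' \<Longrightarrow> stl_eq m n smul y y' \<Longrightarrow> stl_eq m n smul (Br x y) (Br x' y')"
| add_assoc: "stl_eq m n smul (Ad (Ad x y) z) (Ad x (Ad y z))"
| add_comm: "stl_eq m n smul (Ad x y) (Ad y x)"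
| add_zero: "stl_eq m n smul (Ad x Zr) x"
| add_neg: "stl_eq m n smul (Ad x (Sm (-1) x)) Zr"
| sm_add: "stl_eq m n smul (Sm k (Ad x y)) (Ad (Sm k x) (Sm k y))"
| add_sm: "stl_eq m n smul (Sm (k + l) x) (Ad (Sm k x) (Sm l x))"
| sm_mult: "stl_eq m n smul (Sm (k * l) x) (Sm k (Sm l x))"
| sm_one: "stl_eq m n smul (Sm 1 x) x"
| br_add_left: "stl_eq m n smul (Br (Ad x y) z) (Ad (Br x z) (Br y z))"
| br_add_right: "stl_eq m n smul (Br x (Ad y z)) (Ad (Br x y) (Br x z))"
| br_sm_left: "stl_eq m n smul (Br (Sm k x) y) (Sm k (Br x y))"
| br_sm_right: "stl_eq m n smul (Br x (Sm k y)) (Sm k (Br x y))"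
| leibniz: "hdeg m a da \<Longrightarrow> hdeg m b db \<Longrightarrow> hdeg m c dc \<Longrightarrow>
     stl_eq m n smul (Br (Br a b) c)
       (Ad (Br a (Br b c)) (Sm (- sgn (da \<and> db)) (Br b (Br a c))))"
| rel1_add: "i < m + n \<Longrightarrow> j < m + n \<Longrightarrow> i \<noteq> j \<Longrightarrow>
     stl_eq m n smul (Gen i j (a + b)) (Ad (Gen i j a) (Gen i j b))"
| rel1_sm: "i < m + n \<Longrightarrow> j < m + n \<Longrightarrow> i \<noteq> j \<Longrightarrow>
     stl_eq m n smul (Gen i j (smul k a)) (Sm k (Gen i j a))"
| rel2: "i < m + n \<Longrightarrow> j < m + n \<Longrightarrow> k < m + n \<Longrightarrow> l < m + n \<Longrightarrow> i \<noteq> j \<Longrightarrow> k \<noteq> l \<Longrightarrow>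
     i \<noteq> l \<Longrightarrow> j \<noteq> k \<Longrightarrow> stl_eq m n smul (Br (Gen i j a) (Gen k l b)) Zr"
| rel3: "i < m + n \<Longrightarrow> j < m + n \<Longrightarrow> l < m + n \<Longrightarrow> i \<noteq> j \<Longrightarrow> j \<noteq> l \<Longrightarrow>
     i \<noteq> l \<Longrightarrow> stl_eq m n smul (Br (Gen i j a) (Gen j l b)) (Gen i l (a * b))"
| rel4: "i < m + n \<Longrightarrow> j < m + n \<Longrightarrow> k < m + n \<Longrightarrow> i \<noteq> j \<Longrightarrow> k \<noteq> i \<Longrightarrow>
     j \<noteq> k \<Longrightarrow> stl_eq m n smul (Br (Gen i j a) (Gen k i b))
        (Sm (- sgn (tau m i j \<and> tau m k i)) (Gen k j (b * a)))"

text \<open>Matrices in gl(m,n,A): functions nat => nat => 'a, only entries with indices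
  < m+n matter (all others are 0 for the matrices arising here).\<close>

type_synonym 'a mat = "nat \<Rightarrow> nat \<Rightarrow> 'a"

definition E :: "nat \<Rightarrow> nat \<Rightarrow> 'a::ring_1 \<Rightarrow> 'a mat" where
  "E i j a = (\<lambda>r s. if r = i \<and> s = j then a else 0)"

definition mmul :: "nat \<Rightarrow> 'a::ring_1 mat \<Rightarrow> 'a mat \<Rightarrow> 'a mat" where
  "mmul N X Y = (\<lambda>r s. \<Sum>t<N. X r t * Y t s)"

definition mpart :: "nat \<Rightarrow> bool \<Rightarrow> 'a::ring_1 mat \<Rightarrow> 'a mat" where
  "mpart m d X = (\<lambda>r s. if tau m r s = d then X r s else 0)"

text \<open>Super bracket of gl(m,n,A), extended bilinearly to non-homogeneous matrices:
  [X,Y] = XY - sum_{a,b} (-1)^(ab) Y_b X_a.\<close>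

definition sbr :: "nat \<Rightarrow> nat \<Rightarrow> 'a::ring_1 mat \<Rightarrow> 'a mat \<Rightarrow> 'a mat" where
  "sbr m n X Y = (let N = m + n; X0 = mpart m False X; X1 = mpart m True X;
       Y0 = mpart m False Y; Y1 = mpart m True Y
     in (\<lambda>r s. mmul N X Y r s - (mmul N Y0 X0 r s + mmul N Y1 X0 r s
              + mmul N Y0 X1 r s - mmul N Y1 X1 r s)))"

fun psi :: "nat \<Rightarrow> nat \<Rightarrow> ('k \<Rightarrow> 'a::ring_1 \<Rightarrow> 'a) \<Rightarrow> ('k, 'a) tm \<Rightarrow> 'a mat" where
  "psi m n smul (Gen i j a) = E i j a"
| "psi m n smul Zr = (\<lambda>r s. 0)"
| "psi m n smul (Ad x y) = (\<lambda>r s. psi m n smul x r s + psi m n smul y r s)"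
| "psi m n smul (Sm k x) = (\<lambda>r s. smul k (psi m n smul x r s))"
| "psi m n smul (Br x y) = sbr m n (psi m n smul x) (psi m n smul y)"

end

(* Every element of stl(m,n,A) is congruent to g + h, where g lies in the span V of the
   generators v_ij(a) and h in the span H of the elements h_ij(a,b) = [v_ij(a), v_ji(b)].
   On V the map psi is injective: g is recovered from the off-diagonal matrix psi(g) as
   lift(psi g).  Elements of H are even, psi maps them to diagonal matrices, and bracketing
   them with a generator from either side stays in V.  For v_kl(c) with (k,l) outside
   {(i,j),(j,i)} this follows from the Leibniz identity applied to h_ij(a,b); the two remaining
   positions are reached by writing v_kl(c) = [v_kp(c), v_pl(1)] with a third index p, which
   is where m + n >= 3 is needed.
   Now let psi(t) = 0 with t = g + h.  Comparing diagonal and off-diagonal entries gives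
   psi(g) = psi(h) = 0, so g = 0 by injectivity.  For a generator v, [h, v] and [v, h] lie in V
   and have image [psi h, psi v] = 0 resp. [psi v, psi h] = 0, so they vanish; the Leibniz
   identity then kills the brackets of h with H as well. *)

theory Submission
  imports Defs "HOL-Library.Function_Algebras"
begin

section \<open>The super bracket on matrices\<close>

lemma tau_sym: "tau m j i = tau m i j"
  by (auto simp: tau_def)

lemma tau_trans: "tau m r s = (tau m r t \<noteq> tau m t s)"
  by (auto simp: tau_def)

lemma mmul_assoc: "mmul N (mmul N X Y) Z = mmul N X (mmul N Y Z)"
proof (intro ext)
  fix r s
  have "mmul N (mmul N X Y) Z r s = (\<Sum>t<N. \<Sum>u<N. X r u * Y u t * Z t s)"
    by (simp add: mmul_def sum_distrib_right)
  also have "\<dots> = (\<Sum>u<N. \<Sum>t<N. X r u * Y u t * Z t s)"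
    by (rule sum.swap)
  also have "\<dots> = mmul N X (mmul N Y Z) r s"
    by (simp add: mmul_def sum_distrib_left mult.assoc)
  finally show "mmul N (mmul N X Y) Z r s = mmul N X (mmul N Y Z) r s" .
qed

lemma mmul_add_left: "mmul N (X + Y) Z = mmul N X Z + mmul N Y Z"
  by (intro ext) (simp add: mmul_def distrib_right sum.distrib)

lemma mmul_add_right: "mmul N Z (X + Y) = mmul N Z X + mmul N Z Y"
  by (intro ext) (simp add: mmul_def distrib_left sum.distrib)

lemma mmul_minus_left: "mmul N (- X) Z = - mmul N X Z"
  by (intro ext) (simp add: mmul_def sum_negf)

lemma mmul_minus_right: "mmul N Z (- X) = - mmul N Z X"
  by (intro ext) (simp add: mmul_def sum_negf)

lemma mmul_diff_left: "mmul N (X - Y) Z = mmul N X Z - mmul N Y Z"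
  by (intro ext) (simp add: mmul_def left_diff_distrib sum_subtractf)

lemma mmul_diff_right: "mmul N Z (X - Y) = mmul N Z X - mmul N Z Y"
  by (intro ext) (simp add: mmul_def right_diff_distrib sum_subtractf)

lemma mmul_zero_left: "mmul N 0 Z = 0"
  by (intro ext) (simp add: mmul_def)

lemma mmul_zero_right: "mmul N Z 0 = 0"
  by (intro ext) (simp add: mmul_def)

lemmas mmul_linear = mmul_add_left mmul_add_right mmul_minus_left mmul_minus_right
  mmul_diff_left mmul_diff_right mmul_zero_left mmul_zero_right

lemma mmul_E_right: "mmul N X (E k l c) r s = (if s = l \<and> k < N then X r k * c else 0)"
proof -
  have "mmul N X (E k l c) r s = (\<Sum>t<N. if t = k then (if s = l then X r k * c else 0) else 0)"
    unfolding mmul_def E_def by (intro sum.cong) auto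
  then show ?thesis
    by simp
qed

lemma mmul_E_left: "mmul N (E k l c) X r s = (if r = k \<and> l < N then c * X l s else 0)"
proof -
  have "mmul N (E k l c) X r s = (\<Sum>t<N. if t = l then (if r = k then c * X l s else 0) else 0)"
    unfolding mmul_def E_def by (intro sum.cong) auto
  then show ?thesis
    by simp
qed

lemma mmul_E_E: "mmul N (E i j a) (E k l b) = (if j = k \<and> j < N then E i l (a * b) else 0)"
  unfolding fun_eq_iff mmul_E_right by (auto simp: E_def)

lemma mpart_add: "mpart m d (X + Y) = mpart m d X + mpart m d Y"
  by (intro ext) (simp add: mpart_def)

lemma mpart_zero: "mpart m d 0 = 0"
  by (intro ext) (simp add: mpart_def)

lemma mpart_E: "mpart m d (E i j a) = (if tau m i j = d then E i j a else 0)"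
  by (intro ext) (auto simp: mpart_def E_def)

lemma mpart_complement:
  assumes "mpart m d X = X"
  shows "mpart m (\<not> d) X = 0"
proof (intro ext)
  fix r s
  have "mpart m d X r s = X r s"
    using assms by simp
  then show "mpart m (\<not> d) X r s = 0 r s"
    by (auto simp: mpart_def split: if_splits)
qed

lemma sbr_expand: "sbr m n X Y = mmul (m+n) X Y - (mmul (m+n) (mpart m False Y) (mpart m False X)
     + mmul (m+n) (mpart m True Y) (mpart m False X) + mmul (m+n) (mpart m False Y) (mpart m True X)
     - mmul (m+n) (mpart m True Y) (mpart m True X))"
  by (simp add: sbr_def Let_def fun_eq_iff)

lemma sbr_add_left: "sbr m n (X + Y) Z = sbr m n X Z + sbr m n Y Z"
  unfolding sbr_expand by (simp add: mpart_add mmul_linear algebra_simps)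

lemma sbr_add_right: "sbr m n Z (X + Y) = sbr m n Z X + sbr m n Z Y"
  unfolding sbr_expand by (simp add: mpart_add mmul_linear algebra_simps)

lemma sbr_zero_left: "sbr m n 0 Y = 0"
  unfolding sbr_expand by (simp add: mpart_zero mmul_linear)

lemma sbr_zero_right: "sbr m n X 0 = 0"
  unfolding sbr_expand by (simp add: mpart_zero mmul_linear)

lemma sbr_homogeneous:
  assumes "mpart m dx X = X" "mpart m dy Y = Y"
  shows "sbr m n X Y = mmul (m+n) X Y - (if dx \<and> dy then - mmul (m+n) Y X else mmul (m+n) Y X)"
proof -
  have "mpart m (\<not> dx) X = 0" "mpart m (\<not> dy) Y = 0"
    using assms by (simp_all add: mpart_complement)
  then have "mpart m True X = (if dx then X else 0)" "mpart m False X = (if dx then 0 else X)"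
    "mpart m True Y = (if dy then Y else 0)" "mpart m False Y = (if dy then 0 else Y)"
    using assms by (cases dx; cases dy; simp)+
  then show ?thesis
    unfolding sbr_expand by (cases dx; cases dy) (simp_all add: mmul_linear)
qed

lemma mmul_homogeneous:
  assumes "mpart m dx X = X" "mpart m dy Y = Y"
  shows "mpart m (dx \<noteq> dy) (mmul N X Y) = mmul N X Y"
proof (intro ext)
  fix r s
  have X: "X r t = (if tau m r t = dx then X r t else 0)" for t
    using fun_cong[OF fun_cong[OF assms(1)], of r t] by (simp add: mpart_def)
  have Y: "Y t s = (if tau m t s = dy then Y t s else 0)" for t
    using fun_cong[OF fun_cong[OF assms(2)], of t s] by (simp add: mpart_def)
  show "mpart m (dx \<noteq> dy) (mmul N X Y) r s = mmul N X Y r s"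
  proof (cases "tau m r s = (dx \<noteq> dy)")
    case True
    then show ?thesis by (simp add: mpart_def)
  next
    case False
    have "X r t * Y t s = 0" for t
      using False tau_trans[of m r s t] X[of t] Y[of t]
      by (metis (full_types) mult_zero_left mult_zero_right)
    then show ?thesis
      using False by (simp add: mpart_def mmul_def)
  qed
qed

lemma sbr_homogeneous_degree:
  assumes "mpart m dx X = X" "mpart m dy Y = Y"
  shows "mpart m (dx \<noteq> dy) (sbr m n X Y) = sbr m n X Y"
proof -
  have XY: "mpart m (dx \<noteq> dy) (mmul (m+n) X Y) = mmul (m+n) X Y"
    by (rule mmul_homogeneous[OF assms])
  have YX: "mpart m (dx \<noteq> dy) (mmul (m+n) Y X) = mmul (m+n) Y X"
    using mmul_homogeneous[OF assms(2,1), of "m+n"] by (cases dx; cases dy) simp_all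
  have linear: "mpart m d (A - B) = mpart m d A - mpart m d B" "mpart m d (- A) = - mpart m d A"
    for d and A B :: "'a mat"
    by (simp_all add: mpart_def fun_eq_iff)
  have "mpart m (dx \<noteq> dy) (if dx \<and> dy then - mmul (m+n) Y X else mmul (m+n) Y X)
      = (if dx \<and> dy then - mmul (m+n) Y X else mmul (m+n) Y X)"
    by (simp only: if_distrib[of "mpart m (dx \<noteq> dy)"] linear YX)
  then show ?thesis
    unfolding sbr_homogeneous[OF assms] by (simp only: linear XY)
qed

lemma sbr_super_leibniz:
  assumes a: "mpart m da A = A" and b: "mpart m db B = B" and c: "mpart m dc C = C"
  shows "sbr m n (sbr m n A B) C = sbr m n A (sbr m n B C)
     + (if da \<and> db then sbr m n B (sbr m n A C) else - sbr m n B (sbr m n A C))"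
proof -
  note degrees = sbr_homogeneous_degree[OF a b, of n] sbr_homogeneous_degree[OF b c, of n]
    sbr_homogeneous_degree[OF a c, of n]
  show ?thesis
    unfolding sbr_homogeneous[OF degrees(1) c] sbr_homogeneous[OF a degrees(2)]
      sbr_homogeneous[OF b degrees(3)]
    unfolding sbr_homogeneous[OF a b] sbr_homogeneous[OF b c] sbr_homogeneous[OF a c]
    by (cases da; cases db; cases dc) (simp_all add: mmul_linear mmul_assoc algebra_simps)
qed

lemma sbr_E_E:
  "sbr m n (E i j a) (E k l b) = (if j = k \<and> j < m + n then E i l (a * b) else 0)
     - (if tau m i j \<and> tau m k l then - (if l = i \<and> l < m + n then E k j (b * a) else 0)
        else (if l = i \<and> l < m + n then E k j (b * a) else 0))"
proof -
  have "mpart m (tau m i j) (E i j a) = E i j a" "mpart m (tau m k l) (E k l b) = E k l b"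
    by (simp_all add: mpart_E)
  then show ?thesis
    by (simp only: sbr_homogeneous mmul_E_E)
qed

lemma sbr_E_E_vanishes_at_factors:
  assumes "i \<noteq> j" "k \<noteq> l"
  shows "sbr m n (E i j a) (E k l b) i j = 0" "sbr m n (E i j a) (E k l b) k l = 0"
  unfolding sbr_E_E using assms by (auto simp: E_def fun_Compl_def)

lemma sbr_E_E_diagonal:
  assumes "i \<noteq> j" "r \<noteq> s"
  shows "sbr m n (E i j a) (E j i b) r s = 0"
  unfolding sbr_E_E using assms by (auto simp: E_def fun_Compl_def)

lemma sbr_diagonal_E:
  assumes D: "\<forall>r s. r \<noteq> s \<longrightarrow> D r s = 0" and rs: "(r, s) \<noteq> (k, l)"
  shows "sbr m n D (E k l c) r s = 0" "sbr m n (E k l c) D r s = 0"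
proof -
  have part: "mpart m d D r' s' = 0" if "r' \<noteq> s'" for d r' s'
    using D that by (simp add: mpart_def)
  show "sbr m n D (E k l c) r s = 0" "sbr m n (E k l c) D r s = 0"
    using D rs
    by (auto simp: sbr_expand mmul_E_left mmul_E_right mpart_E part mmul_zero_left mmul_zero_right)
qed

section \<open>The map psi is well defined\<close>

locale K_algebra =
  fixes smul :: "'k::field \<Rightarrow> 'a::ring_1 \<Rightarrow> 'a"
  assumes kalg: "kalg smul"
begin

lemma smul_add: "smul k (a + b) = smul k a + smul k b"
  using kalg unfolding kalg_def by blast

lemma add_smul: "smul (k + l) a = smul k a + smul l a"
  using kalg unfolding kalg_def by blast

lemma mult_smul: "smul (k * l) a = smul k (smul l a)"
  using kalg unfolding kalg_def by blast

lemma smul_one: "smul 1 a = a"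
  using kalg unfolding kalg_def by blast

lemma smul_mult_left: "smul k (a * b) = smul k a * b"
  using kalg unfolding kalg_def by blast

lemma smul_mult_right: "smul k (a * b) = a * smul k b"
  using kalg unfolding kalg_def by blast

lemma smul_zero: "smul k 0 = 0"
  using smul_add[of k 0 0] by simp

lemma zero_smul: "smul 0 a = 0"
  using add_smul[of 0 0 a] by simp

lemma smul_minus: "smul k (- a) = - smul k a"
  using smul_add[of k a "- a"] by (simp add: smul_zero minus_unique)

lemma minus_one_smul: "smul (-1) a = - a"
  using add_smul[of 1 "-1" a] by (simp add: zero_smul smul_one eq_neg_iff_add_eq_0 add.commute)

lemma smul_diff: "smul k (a - b) = smul k a - smul k b"
  by (simp only: diff_conv_add_uminus smul_add smul_minus)

lemma smul_sum: "smul k (sum f A) = (\<Sum>x\<in>A. smul k (f x))"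
  by (induct A rule: infinite_finite_induct) (simp_all add: smul_add smul_zero)

lemma smul_minus_sgn: "smul (- sgn b) a = (if b then a else - a)"
  by (simp add: sgn_def smul_one minus_one_smul)

definition msm :: "'k \<Rightarrow> 'a mat \<Rightarrow> 'a mat" where
  "msm k X = (\<lambda>r s. smul k (X r s))"

lemma msm_add: "msm k (X + Y) = msm k X + msm k Y"
  by (intro ext) (simp add: msm_def smul_add)

lemma msm_diff: "msm k (X - Y) = msm k X - msm k Y"
  by (intro ext) (simp add: msm_def smul_diff)

lemma add_msm: "msm (k + l) X = msm k X + msm l X"
  by (intro ext) (simp add: msm_def add_smul)

lemma mult_msm: "msm (k * l) X = msm k (msm l X)"
  by (intro ext) (simp add: msm_def mult_smul)

lemma msm_one: "msm 1 X = X"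
  by (intro ext) (simp add: msm_def smul_one)

lemma msm_minus_one: "msm (-1) X = - X"
  by (intro ext) (simp add: msm_def minus_one_smul)

lemma msm_minus_sgn: "msm (- sgn b) X = (if b then X else - X)"
  by (intro ext) (simp add: msm_def smul_minus_sgn)

lemma mpart_msm: "mpart m d (msm k X) = msm k (mpart m d X)"
  by (intro ext) (simp add: msm_def mpart_def smul_zero)

lemma mmul_msm_left: "mmul N (msm k X) Y = msm k (mmul N X Y)"
  by (intro ext) (simp add: msm_def mmul_def smul_sum smul_mult_left)

lemma mmul_msm_right: "mmul N X (msm k Y) = msm k (mmul N X Y)"
  by (intro ext) (simp add: msm_def mmul_def smul_sum smul_mult_right)

lemma sbr_msm_left: "sbr m n (msm k X) Y = msm k (sbr m n X Y)"
  unfolding sbr_expand by (simp add: mpart_msm mmul_msm_left mmul_msm_right msm_add msm_diff)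

lemma sbr_msm_right: "sbr m n X (msm k Y) = msm k (sbr m n X Y)"
  unfolding sbr_expand by (simp add: mpart_msm mmul_msm_left mmul_msm_right msm_add msm_diff)

lemma E_add: "E i j (a + b) = E i j a + E i j b"
  by (intro ext) (simp add: E_def)

lemma E_smul: "E i j (smul k a) = msm k (E i j a)"
  by (intro ext) (simp add: E_def msm_def smul_zero)

lemma psi_Zr: "psi m n smul Zr = 0"
  by (intro ext) simp

lemma psi_Ad: "psi m n smul (Ad x y) = psi m n smul x + psi m n smul y"
  by (intro ext) simp

lemma psi_Sm: "psi m n smul (Sm k x) = msm k (psi m n smul x)"
  by (simp add: msm_def)

lemma psi_homogeneous: "hdeg m x d \<Longrightarrow> mpart m d (psi m n smul x) = psi m n smul x"
proof (induction x d rule: hdeg.induct)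
  case (1 i j a)
  then show ?case by (simp add: mpart_E)
next
  case (2 d)
  then show ?case by (simp only: psi_Zr mpart_zero)
next
  case (3 s d t)
  then show ?case by (simp only: psi_Ad mpart_add)
next
  case (4 t d k)
  then show ?case by (simp only: psi_Sm mpart_msm)
next
  case (5 s d1 t d2)
  then show ?case by (simp only: psi.simps sbr_homogeneous_degree)
qed

theorem psi_respects_stl_eq: "stl_eq m n smul x y \<Longrightarrow> psi m n smul x = psi m n smul y"
proof (induction rule: stl_eq.induct)
  case (add_assoc x y z)
  then show ?case by (simp only: psi_Ad add.assoc)
next
  case (add_comm x y)
  then show ?case by (simp only: psi_Ad add.commute)
next
  case (add_zero x)
  then show ?case by (simp only: psi_Ad psi_Zr add_0_right)
next
  case (add_neg x)
  then show ?case by (simp only: psi_Ad psi_Zr psi_Sm msm_minus_one right_minus)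
next
  case (sm_add k x y)
  then show ?case by (simp only: psi_Ad psi_Sm msm_add)
next
  case (add_sm k l x)
  then show ?case by (simp only: psi_Ad psi_Sm add_msm)
next
  case (sm_mult k l x)
  then show ?case by (simp only: psi_Sm mult_msm)
next
  case (sm_one x)
  then show ?case by (simp only: psi_Sm msm_one)
next
  case (br_add_left x y z)
  then show ?case by (simp only: psi_Ad psi.simps(5) sbr_add_left)
next
  case (br_add_right x y z)
  then show ?case by (simp only: psi_Ad psi.simps(5) sbr_add_right)
next
  case (br_sm_left k x y)
  then show ?case by (simp only: psi_Sm psi.simps(5) sbr_msm_left)
next
  case (br_sm_right x k y)
  then show ?case by (simp only: psi_Sm psi.simps(5) sbr_msm_right)
next
  case (leibniz a da b db c dc)
  then show ?case
    by (simp only: psi_Ad psi_Sm psi.simps(5) msm_minus_sgn psi_homogeneous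
        sbr_super_leibniz[OF psi_homogeneous psi_homogeneous psi_homogeneous])
next
  case (rel1_add i j a b)
  then show ?case by (simp only: psi_Ad psi.simps(1) E_add)
next
  case (rel1_sm i j k a)
  then show ?case by (simp only: psi_Sm psi.simps(1) E_smul)
next
  case (rel2 i j k l a b)
  then show ?case by (simp add: sbr_E_E)
next
  case (rel3 i j l a b)
  then show ?case by (simp add: sbr_E_E)
next
  case (rel4 i j k a b)
  then show ?case by (simp add: sbr_E_E psi_Sm msm_minus_sgn fun_Compl_def del: psi.simps(4))
qed simp_all

end

section \<open>Calculus of the defining congruence\<close>

fun tm_sum :: "('b \<Rightarrow> ('k, 'a) tm) \<Rightarrow> 'b list \<Rightarrow> ('k, 'a) tm" where
  "tm_sum f [] = Zr"
| "tm_sum f (x # xs) = Ad (f x) (tm_sum f xs)"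

inductive tm_span :: "('k, 'a) tm set \<Rightarrow> ('k, 'a) tm \<Rightarrow> bool" for S where
  base: "s \<in> S \<Longrightarrow> tm_span S s"
| zero: "tm_span S Zr"
| add: "tm_span S x \<Longrightarrow> tm_span S y \<Longrightarrow> tm_span S (Ad x y)"
| scale: "tm_span S x \<Longrightarrow> tm_span S (Sm k x)"

lemma tm_span_tm_sum: "(\<And>z. z \<in> set zs \<Longrightarrow> tm_span S (f z)) \<Longrightarrow> tm_span S (tm_sum f zs)"
  by (induction zs) (auto intro: tm_span.intros)

lemma tm_span_hdeg: "tm_span S x \<Longrightarrow> (\<And>s. s \<in> S \<Longrightarrow> hdeg m s d) \<Longrightarrow> hdeg m x d"
  by (induction rule: tm_span.induct) (auto intro: hdeg.intros)

lemma hdeg_Br_Gen_Gen: "hdeg m (Br (Gen i j a) (Gen j i b)) False"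
  using hdeg.intros(5)[OF hdeg.intros(1) hdeg.intros(1), of m i j a j i b] by (simp add: tau_sym)

locale stl = K_algebra smul for smul :: "'k::field \<Rightarrow> 'a::ring_1 \<Rightarrow> 'a" +
  fixes m n :: nat
begin

abbreviation equiv :: "('k, 'a) tm \<Rightarrow> ('k, 'a) tm \<Rightarrow> bool" (infix "\<approx>" 50) where
  "x \<approx> y \<equiv> stl_eq m n smul x y"

abbreviation ps :: "('k, 'a) tm \<Rightarrow> 'a mat" where
  "ps \<equiv> psi m n smul"

abbreviation N :: nat where
  "N \<equiv> m + n"

abbreviation offdiag :: "nat \<Rightarrow> nat \<Rightarrow> bool" where
  "offdiag i j \<equiv> i < N \<and> j < N \<and> i \<noteq> j"

lemma equiv_trans [trans]: "x \<approx> y \<Longrightarrow> y \<approx> z \<Longrightarrow> x \<approx> z"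
  by (rule stl_eq.trans)

lemmas equiv_refl = stl_eq.refl
  and equiv_sym = stl_eq.sym
  and equiv_cong = stl_eq.cong_Ad stl_eq.cong_Sm stl_eq.cong_Br

lemma Sm_zero: "Sm 0 x \<approx> Zr"
proof -
  have "Sm 0 x = Sm (1 + -1) x"
    by simp
  also have "\<dots> \<approx> Ad (Sm 1 x) (Sm (-1) x)"
    by (rule stl_eq.add_sm)
  also have "\<dots> \<approx> Ad x (Sm (-1) x)"
    by (intro equiv_cong stl_eq.sm_one equiv_refl)
  also have "\<dots> \<approx> Zr"
    by (rule stl_eq.add_neg)
  finally show ?thesis .
qed

lemma Sm_Zr: "Sm k Zr \<approx> Zr"
proof -
  have "Sm k Zr \<approx> Sm k (Sm 0 Zr)"
    by (intro equiv_cong equiv_sym[OF Sm_zero])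
  also have "\<dots> \<approx> Sm (k * 0) Zr"
    by (rule equiv_sym[OF stl_eq.sm_mult])
  also have "\<dots> \<approx> Zr"
    by (simp add: Sm_zero)
  finally show ?thesis .
qed

lemma Br_Zr_left: "Br Zr y \<approx> Zr"
proof -
  have "Br Zr y \<approx> Br (Sm 0 Zr) y"
    by (intro equiv_cong equiv_sym[OF Sm_zero] equiv_refl)
  also have "\<dots> \<approx> Sm 0 (Br Zr y)"
    by (rule stl_eq.br_sm_left)
  also have "\<dots> \<approx> Zr"
    by (rule Sm_zero)
  finally show ?thesis .
qed

lemma Br_Zr_right: "Br x Zr \<approx> Zr"
proof -
  have "Br x Zr \<approx> Br x (Sm 0 Zr)"
    by (intro equiv_cong equiv_sym[OF Sm_zero] equiv_refl)
  also have "\<dots> \<approx> Sm 0 (Br x Zr)"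
    by (rule stl_eq.br_sm_right)
  also have "\<dots> \<approx> Zr"
    by (rule Sm_zero)
  finally show ?thesis .
qed

lemma Ad_Zr_left: "Ad Zr x \<approx> x"
  by (meson equiv_trans stl_eq.add_comm stl_eq.add_zero)

lemma Ad_equiv_Zr_left: "x \<approx> Zr \<Longrightarrow> y \<approx> y' \<Longrightarrow> Ad x y \<approx> y'"
  by (meson equiv_cong(1) equiv_trans Ad_Zr_left)

lemma Ad_equiv_Zr_right: "x \<approx> x' \<Longrightarrow> y \<approx> Zr \<Longrightarrow> Ad x y \<approx> x'"
  by (meson equiv_cong(1) equiv_trans stl_eq.add_zero)

lemma Ad_Ad_swap: "Ad (Ad a b) (Ad c d) \<approx> Ad (Ad a c) (Ad b d)"
proof -
  have "Ad (Ad a b) (Ad c d) \<approx> Ad a (Ad b (Ad c d))"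
    by (rule stl_eq.add_assoc)
  also have "\<dots> \<approx> Ad a (Ad (Ad b c) d)"
    by (intro equiv_cong equiv_refl equiv_sym[OF stl_eq.add_assoc])
  also have "\<dots> \<approx> Ad a (Ad (Ad c b) d)"
    by (intro equiv_cong equiv_refl stl_eq.add_comm)
  also have "\<dots> \<approx> Ad a (Ad c (Ad b d))"
    by (intro equiv_cong equiv_refl stl_eq.add_assoc)
  also have "\<dots> \<approx> Ad (Ad a c) (Ad b d)"
    by (rule equiv_sym[OF stl_eq.add_assoc])
  finally show ?thesis .
qed

lemma Ad_equiv_solve: "Ad x q \<approx> z \<Longrightarrow> x \<approx> Ad z (Sm (-1) q)"
proof -
  assume sum: "Ad x q \<approx> z"
  have "x \<approx> Ad x Zr"
    by (rule equiv_sym[OF stl_eq.add_zero])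
  also have "\<dots> \<approx> Ad x (Ad q (Sm (-1) q))"
    by (intro equiv_cong equiv_refl equiv_sym[OF stl_eq.add_neg])
  also have "\<dots> \<approx> Ad (Ad x q) (Sm (-1) q)"
    by (rule equiv_sym[OF stl_eq.add_assoc])
  also have "\<dots> \<approx> Ad z (Sm (-1) q)"
    by (intro equiv_cong sum equiv_refl)
  finally show ?thesis .
qed

lemma Gen_zero: "offdiag i j \<Longrightarrow> Gen i j 0 \<approx> Zr"
proof -
  assume ij: "offdiag i j"
  have "Gen i j 0 = Gen i j (smul 0 0)"
    by (simp add: zero_smul)
  also have "\<dots> \<approx> Sm 0 (Gen i j 0)"
    using ij by (intro stl_eq.rel1_sm) auto
  also have "\<dots> \<approx> Zr"
    by (rule Sm_zero)
  finally show ?thesis .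
qed

lemma Sm_minus_one_twice: "Sm (-1) (Sm (-1) x) \<approx> x"
proof -
  have "Sm (-1) (Sm (-1) x) \<approx> Sm ((-1) * (-1)) x"
    by (rule equiv_sym[OF stl_eq.sm_mult])
  also have "\<dots> = Sm 1 x"
    by simp
  also have "\<dots> \<approx> x"
    by (rule stl_eq.sm_one)
  finally show ?thesis .
qed

lemma leibniz_even:
  assumes "hdeg m t False" "hdeg m b db" "hdeg m c dc"
  shows "Br t (Br b c) \<approx> Ad (Br (Br t b) c) (Br b (Br t c))"
proof -
  have "Ad (Br t (Br b c)) (Sm (-1) (Br b (Br t c))) \<approx> Br (Br t b) c"
    using stl_eq.leibniz[OF assms] by (simp add: sgn_def equiv_sym)
  then have "Br t (Br b c) \<approx> Ad (Br (Br t b) c) (Sm (-1) (Sm (-1) (Br b (Br t c))))"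
    by (rule Ad_equiv_solve)
  also have "\<dots> \<approx> Ad (Br (Br t b) c) (Br b (Br t c))"
    by (intro equiv_cong equiv_refl Sm_minus_one_twice)
  finally show ?thesis .
qed

lemma tm_sum_cong: "(\<And>z. z \<in> set zs \<Longrightarrow> f z \<approx> g z) \<Longrightarrow> tm_sum f zs \<approx> tm_sum g zs"
  by (induction zs) (auto intro: equiv_refl equiv_cong)

lemma tm_sum_Ad: "tm_sum (\<lambda>z. Ad (f z) (g z)) zs \<approx> Ad (tm_sum f zs) (tm_sum g zs)"
proof (induction zs)
  case Nil
  show ?case by (simp add: equiv_sym[OF stl_eq.add_zero])
next
  case (Cons z zs)
  have "tm_sum (\<lambda>z. Ad (f z) (g z)) (z # zs) \<approx> Ad (Ad (f z) (g z)) (Ad (tm_sum f zs) (tm_sum g zs))"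
    using Cons.IH by (simp add: equiv_cong equiv_refl)
  also have "\<dots> \<approx> Ad (Ad (f z) (tm_sum f zs)) (Ad (g z) (tm_sum g zs))"
    by (rule Ad_Ad_swap)
  finally show ?case by simp
qed

lemma tm_sum_Sm: "tm_sum (\<lambda>z. Sm k (f z)) zs \<approx> Sm k (tm_sum f zs)"
proof (induction zs)
  case Nil
  show ?case by (simp add: equiv_sym[OF Sm_Zr])
next
  case (Cons z zs)
  have "tm_sum (\<lambda>z. Sm k (f z)) (z # zs) \<approx> Ad (Sm k (f z)) (Sm k (tm_sum f zs))"
    using Cons.IH by (simp add: equiv_cong equiv_refl)
  also have "\<dots> \<approx> Sm k (Ad (f z) (tm_sum f zs))"
    by (rule equiv_sym[OF stl_eq.sm_add])
  finally show ?case by simp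
qed

lemma tm_sum_Zr: "(\<And>z. z \<in> set zs \<Longrightarrow> f z \<approx> Zr) \<Longrightarrow> tm_sum f zs \<approx> Zr"
  by (induction zs) (auto simp: equiv_refl Ad_equiv_Zr_left)

lemma tm_sum_single:
  "distinct zs \<Longrightarrow> z0 \<in> set zs \<Longrightarrow> (\<And>z. z \<in> set zs \<Longrightarrow> z \<noteq> z0 \<Longrightarrow> f z \<approx> Zr)
    \<Longrightarrow> tm_sum f zs \<approx> f z0"
proof (induction zs)
  case Nil
  then show ?case by simp
next
  case (Cons z zs)
  show ?case
  proof (cases "z = z0")
    case True
    have "tm_sum f zs \<approx> Zr"
      using Cons.prems True by (intro tm_sum_Zr) auto
    then show ?thesis
      using True by (simp add: Ad_equiv_Zr_right equiv_refl)
  next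
    case False
    then show ?thesis
      using Cons by (simp add: Ad_equiv_Zr_left)
  qed
qed

definition stl_subspace :: "(('k, 'a) tm \<Rightarrow> bool) \<Rightarrow> bool" where
  "stl_subspace P \<longleftrightarrow> P Zr \<and> (\<forall>x y. P x \<longrightarrow> P y \<longrightarrow> P (Ad x y)) \<and> (\<forall>k x. P x \<longrightarrow> P (Sm k x))
     \<and> (\<forall>x y. x \<approx> y \<longrightarrow> P y \<longrightarrow> P x)"

lemma subspace_Zr: "stl_subspace P \<Longrightarrow> P Zr"
  by (simp add: stl_subspace_def)

lemma subspace_Ad: "stl_subspace P \<Longrightarrow> P x \<Longrightarrow> P y \<Longrightarrow> P (Ad x y)"
  by (simp add: stl_subspace_def)

lemma subspace_Sm: "stl_subspace P \<Longrightarrow> P x \<Longrightarrow> P (Sm k x)"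
  by (simp add: stl_subspace_def)

lemma subspace_equiv: "stl_subspace P \<Longrightarrow> x \<approx> y \<Longrightarrow> P y \<Longrightarrow> P x"
  unfolding stl_subspace_def by blast

lemma subspace_tm_span: "stl_subspace P \<Longrightarrow> (\<And>s. s \<in> S \<Longrightarrow> P s) \<Longrightarrow> tm_span S x \<Longrightarrow> P x"
  by (erule tm_span.induct) (auto intro: subspace_Zr subspace_Ad subspace_Sm)

lemma subspace_conj: "stl_subspace P \<Longrightarrow> stl_subspace Q \<Longrightarrow> stl_subspace (\<lambda>x. P x \<and> Q x)"
  unfolding stl_subspace_def by blast

lemma subspace_Br_fst: "stl_subspace P \<Longrightarrow> stl_subspace (\<lambda>x. P (Br x t))"
  unfolding stl_subspace_def
  by (meson Br_Zr_left stl_eq.br_add_left stl_eq.br_sm_left equiv_cong(3) equiv_refl)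

lemma subspace_Br_snd: "stl_subspace P \<Longrightarrow> stl_subspace (\<lambda>x. P (Br t x))"
  unfolding stl_subspace_def
  by (meson Br_Zr_right stl_eq.br_add_right stl_eq.br_sm_right equiv_cong(3) equiv_refl)

lemma subspace_equiv_Zr: "stl_subspace (\<lambda>x. x \<approx> Zr)"
  unfolding stl_subspace_def
  by (meson equiv_refl equiv_trans Ad_equiv_Zr_left equiv_cong(2) Sm_Zr)

section \<open>The span of the generators\<close>

definition offdiag_pairs :: "(nat \<times> nat) list" where
  "offdiag_pairs = filter (\<lambda>(p, q). p \<noteq> q) (List.product [0..<N] [0..<N])"

definition lift :: "'a mat \<Rightarrow> ('k, 'a) tm" where
  "lift M = tm_sum (\<lambda>(p, q). Gen p q (M p q)) offdiag_pairs"

lemma set_offdiag_pairs: "set offdiag_pairs = {(p, q). offdiag p q}"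
  by (auto simp: offdiag_pairs_def)

lemma distinct_offdiag_pairs: "distinct offdiag_pairs"
  by (simp add: offdiag_pairs_def distinct_product)

lemma lift_E:
  assumes "offdiag p q"
  shows "lift (E p q c) \<approx> Gen p q c"
proof -
  have "lift (E p q c) \<approx> (\<lambda>(p', q'). Gen p' q' (E p q c p' q')) (p, q)"
    unfolding lift_def
  proof (rule tm_sum_single[OF distinct_offdiag_pairs])
    show "(p, q) \<in> set offdiag_pairs"
      using assms by (simp add: set_offdiag_pairs)
    fix z
    assume z: "z \<in> set offdiag_pairs" "z \<noteq> (p, q)"
    obtain p' q' where "z = (p', q')"
      by fastforce
    with z show "(\<lambda>(p', q'). Gen p' q' (E p q c p' q')) z \<approx> Zr"
      using Gen_zero[of p' q'] by (auto simp: set_offdiag_pairs E_def)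
  qed
  then show ?thesis
    by (simp add: E_def)
qed

lemma lift_zero: "lift 0 \<approx> Zr"
  unfolding lift_def by (rule tm_sum_Zr) (auto simp: set_offdiag_pairs Gen_zero)

lemma lift_add: "lift (M + M') \<approx> Ad (lift M) (lift M')"
proof -
  have "lift (M + M') \<approx>
      tm_sum (\<lambda>z. Ad ((\<lambda>(p, q). Gen p q (M p q)) z) ((\<lambda>(p, q). Gen p q (M' p q)) z)) offdiag_pairs"
    unfolding lift_def by (rule tm_sum_cong) (auto simp: set_offdiag_pairs intro: stl_eq.rel1_add)
  also have "\<dots> \<approx> Ad (lift M) (lift M')"
    unfolding lift_def by (rule tm_sum_Ad)
  finally show ?thesis .
qed

lemma lift_msm: "lift (msm k M) \<approx> Sm k (lift M)"
proof -
  have "lift (msm k M) \<approx> tm_sum (\<lambda>z. Sm k ((\<lambda>(p, q). Gen p q (M p q)) z)) offdiag_pairs"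
    unfolding lift_def
    by (rule tm_sum_cong) (auto simp: set_offdiag_pairs msm_def intro: stl_eq.rel1_sm)
  also have "\<dots> \<approx> Sm k (lift M)"
    unfolding lift_def by (rule tm_sum_Sm)
  finally show ?thesis .
qed

lemma tm_span_lift: "tm_span {Gen p q (M p q) | p q. offdiag p q} (lift M)"
  unfolding lift_def by (rule tm_span_tm_sum) (auto simp: set_offdiag_pairs intro: tm_span.base)

definition gens :: "('k, 'a) tm set" where
  "gens = {Gen i j a | i j a. offdiag i j}"

lemma tm_span_gens_equiv_lift: "tm_span gens g \<Longrightarrow> g \<approx> lift (ps g)"
proof (induction rule: tm_span.induct)
  case (base s)
  then show ?case by (auto simp: gens_def intro: equiv_sym[OF lift_E])
next
  case zero
  show ?case by (simp only: psi_Zr equiv_sym[OF lift_zero])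
next
  case (add x y)
  have "Ad x y \<approx> Ad (lift (ps x)) (lift (ps y))"
    using add.IH by (rule equiv_cong)
  also have "\<dots> \<approx> lift (ps (Ad x y))"
    unfolding psi_Ad by (rule equiv_sym[OF lift_add])
  finally show ?case .
next
  case (scale x k)
  have "Sm k x \<approx> Sm k (lift (ps x))"
    using scale.IH by (rule equiv_cong)
  also have "\<dots> \<approx> lift (ps (Sm k x))"
    unfolding psi_Sm by (rule equiv_sym[OF lift_msm])
  finally show ?case .
qed

lemma tm_span_psi_entry_zero:
  "tm_span S x \<Longrightarrow> (\<And>s. s \<in> S \<Longrightarrow> ps s r c = 0) \<Longrightarrow> ps x r c = 0"
  by (induction rule: tm_span.induct) (auto simp: smul_zero)

lemma tm_span_gens_diagonal: "tm_span gens g \<Longrightarrow> ps g r r = 0"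
  by (erule tm_span_psi_entry_zero) (auto simp: gens_def E_def)

definition in_gen_span :: "('k, 'a) tm \<Rightarrow> bool" where
  "in_gen_span x \<longleftrightarrow> (\<exists>g. tm_span gens g \<and> x \<approx> g)"

lemma subspace_in_gen_span: "stl_subspace in_gen_span"
  unfolding stl_subspace_def in_gen_span_def
  by (meson equiv_refl equiv_trans equiv_cong(1,2) tm_span.zero tm_span.add tm_span.scale)

lemma in_gen_span_Gen: "offdiag i j \<Longrightarrow> in_gen_span (Gen i j a)"
  unfolding in_gen_span_def gens_def by (blast intro: tm_span.base equiv_refl)

lemma in_gen_span_equiv_lift: "in_gen_span x \<Longrightarrow> x \<approx> lift (ps x)"
  unfolding in_gen_span_def
  by (metis equiv_trans tm_span_gens_equiv_lift psi_respects_stl_eq)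

lemma in_gen_span_psi_zero: "in_gen_span x \<Longrightarrow> ps x = 0 \<Longrightarrow> x \<approx> Zr"
  by (metis in_gen_span_equiv_lift lift_zero equiv_trans)

lemma in_gen_span_Br_Gen_Gen:
  assumes ij: "offdiag i j" and kl: "offdiag k l" and not_inverse: "\<not> (j = k \<and> i = l)"
  shows "in_gen_span (Br (Gen i j a) (Gen k l b))"
proof -
  consider "j = k" | "j \<noteq> k" "i = l" | "j \<noteq> k" "i \<noteq> l"
    by blast
  then show ?thesis
  proof cases
    case 1
    then have "Br (Gen i j a) (Gen k l b) \<approx> Gen i l (a * b)"
      using ij kl not_inverse by (auto intro: stl_eq.rel3)
    then show ?thesis
      using 1 ij kl not_inverse
      by (auto intro: subspace_equiv[OF subspace_in_gen_span] in_gen_span_Gen)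
  next
    case 2
    then have "Br (Gen i j a) (Gen k l b) \<approx> Sm (- sgn (tau m i j \<and> tau m k l)) (Gen k j (b * a))"
      using ij kl by (auto intro: stl_eq.rel4)
    then show ?thesis
      using 2 ij kl by (auto intro: subspace_equiv[OF subspace_in_gen_span] in_gen_span_Gen
          subspace_Sm[OF subspace_in_gen_span])
  next
    case 3
    then have "Br (Gen i j a) (Gen k l b) \<approx> Zr"
      using ij kl by (auto intro: stl_eq.rel2)
    then show ?thesis
      by (rule subspace_equiv[OF subspace_in_gen_span _ subspace_Zr[OF subspace_in_gen_span]])
  qed
qed

text \<open>Bracketing with \<open>v\<^sub>i\<^sub>j(a)\<close> preserves the span of the generators as long as no
  \<open>v\<^sub>j\<^sub>i\<close>-component is involved; rewriting \<open>y\<close> as \<open>lift (ps y)\<close> turns that component into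
  the entry \<open>ps y j i\<close>.\<close>

lemma in_gen_span_Br_Gen_left:
  assumes ij: "offdiag i j" and y: "in_gen_span y" and ji: "ps y j i = 0"
  shows "in_gen_span (Br (Gen i j a) y)"
proof -
  let ?P = "\<lambda>z. in_gen_span (Br (Gen i j a) z)"
  have P: "stl_subspace ?P"
    by (rule subspace_Br_snd[OF subspace_in_gen_span])
  have "?P (Gen p q (ps y p q))" if pq: "offdiag p q" for p q
  proof (cases "(p, q) = (j, i)")
    case True
    then have "Gen p q (ps y p q) \<approx> Zr"
      using ji pq by (simp add: Gen_zero)
    then show ?thesis
      by (rule subspace_equiv[OF P _ subspace_Zr[OF P]])
  next
    case False
    then show ?thesis
      using ij pq by (intro in_gen_span_Br_Gen_Gen) auto
  qed
  then have "?P (lift (ps y))"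
    by (intro subspace_tm_span[OF P _ tm_span_lift]) blast
  then show ?thesis
    by (rule subspace_equiv[OF P in_gen_span_equiv_lift[OF y]])
qed

lemma in_gen_span_Br_Gen_right:
  assumes ij: "offdiag i j" and y: "in_gen_span y" and ji: "ps y j i = 0"
  shows "in_gen_span (Br y (Gen i j a))"
proof -
  let ?P = "\<lambda>z. in_gen_span (Br z (Gen i j a))"
  have P: "stl_subspace ?P"
    by (rule subspace_Br_fst[OF subspace_in_gen_span])
  have "?P (Gen p q (ps y p q))" if pq: "offdiag p q" for p q
  proof (cases "(p, q) = (j, i)")
    case True
    then have "Gen p q (ps y p q) \<approx> Zr"
      using ji pq by (simp add: Gen_zero)
    then show ?thesis
      by (rule subspace_equiv[OF P _ subspace_Zr[OF P]])
  next
    case False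
    then show ?thesis
      using ij pq by (intro in_gen_span_Br_Gen_Gen) auto
  qed
  then have "?P (lift (ps y))"
    by (intro subspace_tm_span[OF P _ tm_span_lift]) blast
  then show ?thesis
    by (rule subspace_equiv[OF P in_gen_span_equiv_lift[OF y]])
qed

section \<open>The elements \<open>h\<^sub>i\<^sub>j(a, b)\<close> act on the span of the generators\<close>

definition hgens :: "('k, 'a) tm set" where
  "hgens = {Br (Gen i j a) (Gen j i b) | i j a b. offdiag i j}"

lemma tm_span_hgens_offdiagonal: "tm_span hgens h \<Longrightarrow> r \<noteq> s \<Longrightarrow> ps h r s = 0"
  by (erule tm_span_psi_entry_zero) (auto simp: hgens_def sbr_E_E_diagonal)

lemma tm_span_hgens_even: "tm_span hgens h \<Longrightarrow> hdeg m h False"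
  by (erule tm_span_hdeg) (auto simp: hgens_def hdeg_Br_Gen_Gen)

lemma hgen_Br_Gen_in_gen_span:
  assumes ij: "offdiag i j" and kl: "offdiag k l" and "(k, l) \<noteq> (i, j)" "(k, l) \<noteq> (j, i)"
  shows "in_gen_span (Br (Br (Gen i j a) (Gen j i b)) (Gen k l c))"
    and "in_gen_span (Br (Gen k l c) (Br (Gen i j a) (Gen j i b)))"
proof -
  let ?A = "Gen i j a" and ?B = "Gen j i b" and ?C = "Gen k l c"
  let ?s = "- sgn (tau m i j \<and> tau m j i) :: 'k" and ?s' = "- sgn (tau m k l \<and> tau m i j) :: 'k"
  note span = subspace_in_gen_span and deg = hdeg.intros(1)[of m]
  have factors: "ps (Br ?B ?C) j i = 0" "ps (Br ?A ?C) i j = 0" "ps (Br ?C ?A) i j = 0"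
    "ps (Br ?C ?B) j i = 0"
    using ij kl by (simp_all add: sbr_E_E_vanishes_at_factors)
  have "in_gen_span (Br ?A (Br ?B ?C))" "in_gen_span (Br ?B (Br ?A ?C))"
    "in_gen_span (Br (Br ?C ?A) ?B)" "in_gen_span (Br ?A (Br ?C ?B))"
    using assms factors
    by (auto intro!: in_gen_span_Br_Gen_left in_gen_span_Br_Gen_right in_gen_span_Br_Gen_Gen)
  moreover have "Br (Br ?A ?B) ?C \<approx> Ad (Br ?A (Br ?B ?C)) (Sm ?s (Br ?B (Br ?A ?C)))"
    by (rule stl_eq.leibniz[OF deg deg deg])
  moreover have "Br ?C (Br ?A ?B) \<approx> Ad (Br (Br ?C ?A) ?B) (Sm (-1) (Sm ?s' (Br ?A (Br ?C ?B))))"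
    by (rule Ad_equiv_solve[OF equiv_sym[OF stl_eq.leibniz[OF deg deg deg]]])
  ultimately show "in_gen_span (Br (Br ?A ?B) ?C)" "in_gen_span (Br ?C (Br ?A ?B))"
    by (meson subspace_equiv[OF span] subspace_Ad[OF span] subspace_Sm[OF span])+
qed

lemma Gen_factor:
  assumes "offdiag k l" "p < N" "p \<noteq> k" "p \<noteq> l"
  shows "Gen k l c \<approx> Br (Gen k p c) (Gen p l 1)"
proof -
  have "Br (Gen k p c) (Gen p l 1) \<approx> Gen k l (c * 1)"
    using assms by (intro stl_eq.rel3) auto
  then show ?thesis
    by (simp add: equiv_sym)
qed

text \<open>Routing \<open>v\<^sub>k\<^sub>l(c) = [v\<^sub>k\<^sub>p(c), v\<^sub>p\<^sub>l(1)]\<close> through a third index \<open>p\<close>; this is where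
  \<open>m + n \<ge> 3\<close> enters.\<close>

lemma in_gen_span_Br_via_third_index:
  assumes t: "hdeg m t False" and diag: "\<forall>r s. r \<noteq> s \<longrightarrow> ps t r s = 0"
    and kl: "offdiag k l" and p: "p < N" "p \<noteq> k" "p \<noteq> l"
    and kp: "\<And>c. in_gen_span (Br t (Gen k p c)) \<and> in_gen_span (Br (Gen k p c) t)"
    and pl: "\<And>c. in_gen_span (Br t (Gen p l c)) \<and> in_gen_span (Br (Gen p l c) t)"
  shows "in_gen_span (Br t (Gen k l c)) \<and> in_gen_span (Br (Gen k l c) t)"
proof -
  let ?X = "Gen k p c" and ?Y = "Gen p l 1"
  note span = subspace_in_gen_span
  have entries: "ps (Br t ?X) l p = 0" "ps (Br t ?Y) p k = 0" "ps (Br ?Y t) p k = 0"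
    "ps (Br ?X t) l p = 0"
    using kl p by (simp_all add: sbr_diagonal_E[OF diag])
  have "in_gen_span (Br (Br t ?X) ?Y)" "in_gen_span (Br ?X (Br t ?Y))"
    "in_gen_span (Br ?X (Br ?Y t))" "in_gen_span (Br ?Y (Br ?X t))"
    using kl p entries kp pl
    by (simp_all add: in_gen_span_Br_Gen_left in_gen_span_Br_Gen_right)
  moreover have "Br t (Br ?X ?Y) \<approx> Ad (Br (Br t ?X) ?Y) (Br ?X (Br t ?Y))"
    by (rule leibniz_even[OF t hdeg.intros(1) hdeg.intros(1)])
  moreover have "Br (Br ?X ?Y) t \<approx>
      Ad (Br ?X (Br ?Y t)) (Sm (- sgn (tau m k p \<and> tau m p l)) (Br ?Y (Br ?X t)))"
    by (rule stl_eq.leibniz[OF hdeg.intros(1) hdeg.intros(1) t])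
  ultimately have "in_gen_span (Br t (Br ?X ?Y))" "in_gen_span (Br (Br ?X ?Y) t)"
    by (meson subspace_equiv[OF span] subspace_Ad[OF span] subspace_Sm[OF span])+
  moreover have "Gen k l c \<approx> Br ?X ?Y"
    using kl p by (rule Gen_factor)
  ultimately show ?thesis
    by (meson subspace_equiv[OF span] equiv_cong(3) equiv_refl)
qed

definition preserves_gen_span :: "('k, 'a) tm \<Rightarrow> bool" where
  "preserves_gen_span t \<longleftrightarrow>
     (\<forall>k l c. offdiag k l \<longrightarrow> in_gen_span (Br t (Gen k l c)) \<and> in_gen_span (Br (Gen k l c) t))"

lemma hgen_preserves_gen_span:
  assumes N3: "3 \<le> N" and ij: "offdiag i j"
  shows "preserves_gen_span (Br (Gen i j a) (Gen j i b))"
  unfolding preserves_gen_span_def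
proof (intro allI impI)
  let ?h = "Br (Gen i j a) (Gen j i b)"
  fix k l c
  assume kl: "offdiag k l"
  have generic: "in_gen_span (Br ?h (Gen k' l' c')) \<and> in_gen_span (Br (Gen k' l' c') ?h)"
    if "offdiag k' l'" "(k', l') \<noteq> (i, j)" "(k', l') \<noteq> (j, i)" for k' l' c'
    using hgen_Br_Gen_in_gen_span[OF ij that] by blast
  show "in_gen_span (Br ?h (Gen k l c)) \<and> in_gen_span (Br (Gen k l c) ?h)"
  proof (cases "(k, l) = (i, j) \<or> (k, l) = (j, i)")
    case True
    define p :: nat where "p = (if 0 \<notin> {i, j} then 0 else if 1 \<notin> {i, j} then 1 else 2)"
    have p: "p < N" "p \<noteq> k" "p \<noteq> l"
      using N3 True by (auto simp: p_def)
    show ?thesis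
    proof (rule in_gen_span_Br_via_third_index[OF hdeg_Br_Gen_Gen _ kl p])
      show "\<forall>r s. r \<noteq> s \<longrightarrow> ps ?h r s = 0"
        using ij by (simp add: sbr_E_E_diagonal)
      show "in_gen_span (Br ?h (Gen k p c')) \<and> in_gen_span (Br (Gen k p c') ?h)"
        "in_gen_span (Br ?h (Gen p l c')) \<and> in_gen_span (Br (Gen p l c') ?h)" for c'
        using True kl p generic[of k p c'] generic[of p l c'] by auto
    qed
  next
    case False
    then show ?thesis
      using kl by (intro generic) auto
  qed
qed

lemma tm_span_hgens_preserves_gen_span:
  assumes N3: "3 \<le> N" and h: "tm_span hgens h"
  shows "preserves_gen_span h"
  unfolding preserves_gen_span_def
proof (intro allI impI)
  fix k l c
  assume kl: "offdiag k l"
  let ?P = "\<lambda>x. in_gen_span (Br x (Gen k l c)) \<and> in_gen_span (Br (Gen k l c) x)"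
  have "stl_subspace ?P"
    by (intro subspace_conj subspace_Br_fst subspace_Br_snd subspace_in_gen_span)
  moreover have "?P s" if "s \<in> hgens" for s
    using that kl hgen_preserves_gen_span[OF N3] unfolding hgens_def preserves_gen_span_def by blast
  ultimately show "?P h"
    using h by (rule subspace_tm_span)
qed

section \<open>Splitting off the span of the generators\<close>

definition splits :: "('k, 'a) tm \<Rightarrow> bool" where
  "splits x \<longleftrightarrow> (\<exists>g h. tm_span gens g \<and> tm_span hgens h \<and> x \<approx> Ad g h)"

lemma subspace_splits: "stl_subspace splits"
  unfolding stl_subspace_def
proof (intro conjI allI impI)
  show "splits Zr"
    unfolding splits_def by (blast intro: tm_span.zero equiv_sym[OF stl_eq.add_zero])
  show "splits (Ad x y)" if xy: "splits x" "splits y" for x y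
  proof -
    obtain g h g' h' where "tm_span gens g" "tm_span hgens h" "x \<approx> Ad g h"
      "tm_span gens g'" "tm_span hgens h'" "y \<approx> Ad g' h'"
      using xy unfolding splits_def by blast
    moreover have "Ad (Ad g h) (Ad g' h') \<approx> Ad (Ad g g') (Ad h h')"
      by (rule Ad_Ad_swap)
    ultimately show ?thesis
      unfolding splits_def by (meson tm_span.add equiv_cong(1) equiv_trans)
  qed
  show "splits (Sm k x)" if "splits x" for k x
    using that unfolding splits_def by (meson tm_span.scale equiv_cong(2) equiv_trans stl_eq.sm_add)
  show "splits x" if "x \<approx> y" "splits y" for x y
    using that unfolding splits_def by (meson equiv_trans)
qed

lemma in_gen_span_splits: "in_gen_span x \<Longrightarrow> splits x"
  unfolding in_gen_span_def splits_def
  by (meson tm_span.zero equiv_trans equiv_sym[OF stl_eq.add_zero])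

lemma hgens_splits: "s \<in> hgens \<Longrightarrow> splits s"
  unfolding splits_def by (meson tm_span.base tm_span.zero equiv_sym[OF Ad_Zr_left])

lemma splits_Br_in_gen_span:
  assumes "in_gen_span x" "in_gen_span y"
  shows "splits (Br x y)"
proof -
  have generators: "splits (Br u v)" if uv: "u \<in> gens" "v \<in> gens" for u v
  proof -
    obtain i j a k l b where uv: "u = Gen i j a" "v = Gen k l b" and ij: "offdiag i j"
      and kl: "offdiag k l"
      using uv unfolding gens_def by blast
    show ?thesis
    proof (cases "j = k \<and> i = l")
      case True
      then have "Br u v \<in> hgens"
        using uv ij unfolding hgens_def by blast
      then show ?thesis
        by (rule hgens_splits)
    next
      case False
      then show ?thesis
        using uv ij kl by (simp add: in_gen_span_splits in_gen_span_Br_Gen_Gen)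
    qed
  qed
  obtain g g' where "tm_span gens g" "x \<approx> g" "tm_span gens g'" "y \<approx> g'"
    using assms unfolding in_gen_span_def by blast
  moreover have "splits (Br g g')" if "tm_span gens g" "tm_span gens g'" for g g'
    using subspace_Br_fst[OF subspace_splits] _ that(1)
  proof (rule subspace_tm_span)
    show "splits (Br u g')" if "u \<in> gens" for u
      using subspace_Br_snd[OF subspace_splits] generators[OF that] \<open>tm_span gens g'\<close>
      by (rule subspace_tm_span)
  qed
  ultimately show ?thesis
    by (meson subspace_equiv[OF subspace_splits] equiv_cong(3))
qed

lemma splits_Br_tm_span_hgens:
  assumes N3: "3 \<le> N" and h: "tm_span hgens h" and h': "tm_span hgens h'"
  shows "splits (Br h h')"
  using subspace_Br_snd[OF subspace_splits] _ h'
proof (rule subspace_tm_span)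
  fix s
  assume "s \<in> hgens"
  then obtain i j a b where s: "s = Br (Gen i j a) (Gen j i b)" and ij: "offdiag i j"
    unfolding hgens_def by blast
  have pres: "in_gen_span (Br h (Gen i j a))" "in_gen_span (Br h (Gen j i b))"
    using tm_span_hgens_preserves_gen_span[OF N3 h] ij unfolding preserves_gen_span_def by auto
  have "Br h s \<approx> Ad (Br (Br h (Gen i j a)) (Gen j i b)) (Br (Gen i j a) (Br h (Gen j i b)))"
    unfolding s by (rule leibniz_even[OF tm_span_hgens_even[OF h] hdeg.intros(1) hdeg.intros(1)])
  moreover have "splits (Br (Br h (Gen i j a)) (Gen j i b))"
    "splits (Br (Gen i j a) (Br h (Gen j i b)))"
    using pres ij by (simp_all add: splits_Br_in_gen_span in_gen_span_Gen)
  ultimately show "splits (Br h s)"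
    by (meson subspace_equiv[OF subspace_splits] subspace_Ad[OF subspace_splits])
qed

lemma splits_Br:
  assumes N3: "3 \<le> N" and "splits x" "splits y"
  shows "splits (Br x y)"
proof -
  obtain g h g' h' where g: "tm_span gens g" and h: "tm_span hgens h" and x: "x \<approx> Ad g h"
    and g': "tm_span gens g'" and h': "tm_span hgens h'" and y: "y \<approx> Ad g' h'"
    using assms(2,3) unfolding splits_def by blast
  have gen_span: "in_gen_span g" "in_gen_span g'"
    using g g' unfolding in_gen_span_def by (blast intro: equiv_refl)+
  have "in_gen_span (Br g h')"
    using subspace_Br_fst[OF subspace_in_gen_span] _ g
    by (rule subspace_tm_span)
      (use tm_span_hgens_preserves_gen_span[OF N3 h'] in
        \<open>auto simp: gens_def preserves_gen_span_def\<close>)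
  moreover have "in_gen_span (Br h g')"
    using subspace_Br_snd[OF subspace_in_gen_span] _ g'
    by (rule subspace_tm_span)
      (use tm_span_hgens_preserves_gen_span[OF N3 h] in
        \<open>auto simp: gens_def preserves_gen_span_def\<close>)
  ultimately have "splits (Ad (Ad (Br g g') (Br g h')) (Ad (Br h g') (Br h h')))"
    using gen_span splits_Br_tm_span_hgens[OF N3 h h']
    by (meson subspace_Ad[OF subspace_splits] in_gen_span_splits splits_Br_in_gen_span)
  moreover have "Br x y \<approx> Ad (Ad (Br g g') (Br g h')) (Ad (Br h g') (Br h h'))"
  proof -
    have "Br x y \<approx> Br (Ad g h) (Ad g' h')"
      using x y by (rule equiv_cong(3))
    also have "\<dots> \<approx> Ad (Br g (Ad g' h')) (Br h (Ad g' h'))"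
      by (rule stl_eq.br_add_left)
    also have "\<dots> \<approx> Ad (Ad (Br g g') (Br g h')) (Ad (Br h g') (Br h h'))"
      by (intro equiv_cong(1) stl_eq.br_add_right)
    finally show ?thesis .
  qed
  ultimately show ?thesis
    by (rule subspace_equiv[OF subspace_splits, rotated])
qed

theorem wf_tm_splits: "3 \<le> N \<Longrightarrow> wf_tm m n x \<Longrightarrow> splits x"
proof (induction x)
  case (Gen i j a)
  then show ?case by (simp add: in_gen_span_splits in_gen_span_Gen)
next
  case Zr
  show ?case by (rule subspace_Zr[OF subspace_splits])
next
  case (Ad x y)
  then show ?case by (simp add: subspace_Ad[OF subspace_splits])
next
  case (Sm k x)
  then show ?case by (simp add: subspace_Sm[OF subspace_splits])
next
  case (Br x y)
  then show ?case by (simp add: splits_Br)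
qed

lemma tm_span_hgens_central:
  assumes N3: "3 \<le> N" and t: "tm_span hgens t" and ps_t: "ps t = 0" and x: "splits x"
  shows "Br t x \<approx> Zr \<and> Br x t \<approx> Zr"
proof -
  let ?P = "\<lambda>x. Br t x \<approx> Zr \<and> Br x t \<approx> Zr"
  have P: "stl_subspace ?P"
    by (intro subspace_conj subspace_Br_fst subspace_Br_snd subspace_equiv_Zr)
  have even: "hdeg m t False"
    by (rule tm_span_hgens_even[OF t])
  have gen: "?P (Gen k l c)" if "offdiag k l" for k l c
    using tm_span_hgens_preserves_gen_span[OF N3 t] that
    by (auto simp: preserves_gen_span_def ps_t sbr_zero_left sbr_zero_right
        intro!: in_gen_span_psi_zero)
  have hgen: "?P s" if s_hgen: "s \<in> hgens" for s
  proof -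
    obtain i j a b where s: "s = Br (Gen i j a) (Gen j i b)" and ij: "offdiag i j"
      using s_hgen unfolding hgens_def by blast
    have "Br t s \<approx> Ad (Br (Br t (Gen i j a)) (Gen j i b)) (Br (Gen i j a) (Br t (Gen j i b)))"
      unfolding s by (rule leibniz_even[OF even hdeg.intros(1) hdeg.intros(1)])
    also have "\<dots> \<approx> Ad (Br Zr (Gen j i b)) (Br (Gen i j a) Zr)"
      using gen ij by (intro equiv_cong equiv_refl) auto
    also have "\<dots> \<approx> Zr"
      by (intro Ad_equiv_Zr_left Br_Zr_left Br_Zr_right)
    finally have left: "Br t s \<approx> Zr" .
    have "Br s t \<approx> Ad (Br (Gen i j a) (Br (Gen j i b) t))
        (Sm (- sgn (tau m i j \<and> tau m j i)) (Br (Gen j i b) (Br (Gen i j a) t)))"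
      unfolding s by (rule stl_eq.leibniz[OF hdeg.intros(1) hdeg.intros(1) even])
    also have "\<dots> \<approx> Ad (Br (Gen i j a) Zr) (Sm (- sgn (tau m i j \<and> tau m j i)) (Br (Gen j i b) Zr))"
      using gen ij by (intro equiv_cong equiv_refl) auto
    also have "\<dots> \<approx> Zr"
      by (meson Ad_equiv_Zr_left Br_Zr_right Sm_Zr equiv_cong(2) equiv_trans)
    finally show ?thesis
      using left by blast
  qed
  obtain g h where g: "tm_span gens g" and h: "tm_span hgens h" and x: "x \<approx> Ad g h"
    using x unfolding splits_def by blast
  have "?P g"
    using P _ g by (rule subspace_tm_span) (use gen in \<open>auto simp: gens_def\<close>)
  moreover have "?P h"
    using P hgen h by (rule subspace_tm_span)
  ultimately show ?thesis
    using subspace_equiv[OF P x] subspace_Ad[OF P] by blast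
qed

theorem ker_psi_central:
  assumes N3: "3 \<le> N" and "wf_tm m n t" "wf_tm m n x" and ker: "ps t = (\<lambda>r s. 0)"
  shows "Br t x \<approx> Zr \<and> Br x t \<approx> Zr"
proof -
  obtain g h where g: "tm_span gens g" and h: "tm_span hgens h" and t: "t \<approx> Ad g h"
    using wf_tm_splits[OF N3 assms(2)] unfolding splits_def by blast
  have sum: "ps g r s + ps h r s = 0" for r s
    using fun_cong[OF fun_cong[OF psi_respects_stl_eq[OF t]], of r s] ker by simp
  have "ps h r s = 0" for r s
  proof (cases "r = s")
    case True
    then show ?thesis
      using sum[of r s] tm_span_gens_diagonal[OF g, of r] by simp
  qed (rule tm_span_hgens_offdiagonal[OF h])
  then have "ps h = 0" "ps g = 0"
    using sum by (auto intro!: ext)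
  then have "g \<approx> Zr"
    using g by (intro in_gen_span_psi_zero) (auto simp: in_gen_span_def intro: equiv_refl)
  then have "t \<approx> h"
    using t Ad_equiv_Zr_left[OF _ equiv_refl] equiv_trans by blast
  then show ?thesis
    using tm_span_hgens_central[OF N3 h \<open>ps h = 0\<close> wf_tm_splits[OF N3 assms(3)]]
    by (meson equiv_cong(3) equiv_refl equiv_trans)
qed

end

theorem theorem3p1:
  fixes m n :: nat and smul :: "'k::field \<Rightarrow> 'a::ring_1 \<Rightarrow> 'a"
  assumes "(2::'k) \<noteq> 0" and "(3::'k) \<noteq> 0"
    and "kalg smul"
    and "m + n \<ge> 3"
    and "wf_tm m n t" and "wf_tm m n x"
    and "psi m n smul t = (\<lambda>r s. 0)"
  shows "stl_eq m n smul (Br t x) Zr \<and> stl_eq m n smul (Br x t) Zr"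
proof -
  interpret stl smul m n
    by unfold_locales (rule assms(3))
  show ?thesis
    using ker_psi_central[OF assms(4-7)] .
qed

end
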